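(* Let $\rho=\sum_j p_j|e_j\rangle\langle e_j|$ be a full-rank density matrix on $\mathbb{C}^D$ (all $p_j>0$, orthonormal eigenvectors $|e_j\rangle$) with Hermitian derivatives $\rho_1=\partial_1\rho$, $\rho_2=\partial_2\rho$. Let $u\in[0,1]$, $\mathbf z\in\mathbb R^6$, $\mathbf b=(0,1,0,0,0,1)^\top$, $A=\tfrac12(z_1\rho+z_2\rho_1+z_3\rho_2-iz_4\rho-iz_5\rho_1-iz_6\rho_2)$, and $$\mathsf L(Y,u,\mathbf z)=-\mathbf b^\top\mathbf z+u\,\mathrm{Tr}[Y\rho Y^\dagger]+(1-u)\,\mathrm{Tr}[Y^\dagger\rho Y]+\mathrm{Tr}[AY]+\mathrm{Tr}[A^\dagger Y^\dagger]$$ for complex $D\times D$ matrices $Y$. Then the $Y$ minimising $\mathsf L(\cdot,u,\mathbf z)$ is $$Y=-\sum_{j,k}(u\,p_k+(1-u)\,p_j)^{-1}\langle e_j|A^\dagger|e_k\rangle\,|e_j\rangle\langle e_k|.$$ *)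

theory Defs
  imports "HOL-Analysis.Analysis"
begin

text \<open>Complex D x D matrices are modelled as complex^'n^'n with D = CARD('n).\<close>

definition cadj :: "complex^'n^'m \<Rightarrow> complex^'m^'n" where
  "cadj M = (\<chi> i j. cnj (M $ j $ i))"

definition mscale :: "complex \<Rightarrow> complex^'n^'m \<Rightarrow> complex^'n^'m" where
  "mscale c M = (\<chi> i j. c * M $ i $ j)"

definition ket_bra :: "complex^'n \<Rightarrow> complex^'n \<Rightarrow> complex^'n^'n" where
  "ket_bra x y = (\<chi> a b. x $ a * cnj (y $ b))"

definition braket :: "complex^'n \<Rightarrow> complex^'n \<Rightarrow> complex" where
  "braket x y = (\<Sum>a\<in>UNIV. cnj (x $ a) * y $ a)"

definition mat_elem :: "complex^'n \<Rightarrow> complex^'n^'n \<Rightarrow> complex^'n \<Rightarrow> complex" where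
  "mat_elem x M y = braket x (M *v y)"

definition orthonormal_basis :: "('n::finite \<Rightarrow> complex^'n) \<Rightarrow> bool" where
  "orthonormal_basis e \<longleftrightarrow> (\<forall>j k. braket (e j) (e k) = (if j = k then 1 else 0))"

definition A_op :: "complex^'n^'n \<Rightarrow> complex^'n^'n \<Rightarrow> complex^'n^'n \<Rightarrow> real^6 \<Rightarrow> complex^'n^'n" where
  "A_op \<rho> \<rho>1 \<rho>2 z = mscale (1/2)
     (mscale (complex_of_real (z$1)) \<rho> + mscale (complex_of_real (z$2)) \<rho>1
      + mscale (complex_of_real (z$3)) \<rho>2
      - mscale (\<i> * complex_of_real (z$4)) \<rho> - mscale (\<i> * complex_of_real (z$5)) \<rho>1
      - mscale (\<i> * complex_of_real (z$6)) \<rho>2)"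

definition bvec :: "real^6" where
  "bvec = (\<chi> i. if i = 2 \<or> i = 6 then 1 else 0)"

text \<open>The Lagrangian L(Y,u,z) (complex-valued; it is real for all Y).\<close>
definition L_fun :: "complex^'n^'n \<Rightarrow> complex^'n^'n \<Rightarrow> complex^'n^'n \<Rightarrow> complex^'n^'n \<Rightarrow> real \<Rightarrow> real^6 \<Rightarrow> complex" where
  "L_fun \<rho> \<rho>1 \<rho>2 Y u z =
     (let A = A_op \<rho> \<rho>1 \<rho>2 z in
       - complex_of_real (bvec \<bullet> z)
       + complex_of_real u * trace (Y ** \<rho> ** cadj Y)
       + complex_of_real (1 - u) * trace (cadj Y ** \<rho> ** Y)
       + trace (A ** Y) + trace (cadj A ** cadj Y))"

end

theory Submission
  imports Defs
begin

text \<open>Write \<open>y\<close> for \<open>Y\<close> and \<open>a\<close> for \<open>A\<close> in the eigenbasis of \<open>\<rho>\<close>, i.e. conjugated by the unitary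
  whose columns are the \<open>e\<^sub>j\<close>; this preserves products, adjoints and traces. There \<open>\<rho>\<close> is diagonal,
  and the real part of the Lagrangian becomes, up to a constant,
  \<open>\<Sum>\<^sub>j\<^sub>k w\<^sub>j\<^sub>k |y\<^sub>j\<^sub>k|\<^sup>2 + 2 Re(a\<^sub>k\<^sub>j y\<^sub>j\<^sub>k)\<close> with \<open>w\<^sub>j\<^sub>k = u p\<^sub>k + (1 - u) p\<^sub>j > 0\<close>. Completing the square
  in every entry separately shows that it exceeds its value at \<open>y\<^sub>j\<^sub>k = - cnj a\<^sub>k\<^sub>j / w\<^sub>j\<^sub>k\<close> by
  \<open>\<Sum>\<^sub>j\<^sub>k w\<^sub>j\<^sub>k |y\<^sub>j\<^sub>k - y\<^sup>*\<^sub>j\<^sub>k|\<^sup>2\<close>, so this is the unique minimiser.\<close>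

lemma matrix_mult_entry: "((A::'a::semiring_1^'n^'m) ** B) $ i $ j = (\<Sum>k\<in>UNIV. A$i$k * B$k$j)"
  by (simp add: matrix_matrix_mult_def)

lemma trace_matrix_mult: "trace ((A::'a::semiring_1^'n^'m) ** B) = (\<Sum>j\<in>UNIV. \<Sum>k\<in>UNIV. A$k$j * B$j$k)"
  by (simp add: trace_def matrix_mult_entry) (rule sum.swap)

lemma double_sum_delta:
  fixes f :: "'a::finite \<Rightarrow> 'b::finite \<Rightarrow> 'c::comm_monoid_add"
  shows "(\<Sum>x\<in>UNIV. \<Sum>y\<in>UNIV. if i = x \<and> k = y then f x y else 0) = f i k"
proof -
  have "(\<Sum>y\<in>UNIV. if i = x \<and> k = y then f x y else 0) = (if i = x then f x k else 0)" for x
    by (cases "i = x") simp_all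
  then show ?thesis by simp
qed

lemma cadj_entry [simp]: "cadj M $ i $ j = cnj (M $ j $ i)"
  by (simp add: cadj_def)

lemma mscale_entry [simp]: "mscale c M $ i $ j = c * M $ i $ j"
  by (simp add: mscale_def)

lemma cadj_cadj [simp]: "cadj (cadj M) = M"
  by (simp add: vec_eq_iff)

lemma cadj_matrix_mult: "cadj ((M::complex^'n^'m) ** N) = cadj N ** cadj M"
  by (simp add: vec_eq_iff matrix_mult_entry mult.commute)

lemma trace_cadj: "trace (cadj (M::complex^'n^'n)) = cnj (trace M)"
  by (simp add: trace_def)

lemma matrix_mult_mscale_right: "(A::complex^'n^'m) ** mscale c M = mscale c (A ** M)"
  by (simp add: vec_eq_iff matrix_mult_entry sum_distrib_left mult_ac)

lemma matrix_mult_mscale_left: "mscale c (M::complex^'n^'m) ** A = mscale c (M ** A)"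
  by (simp add: vec_eq_iff matrix_mult_entry sum_distrib_left mult_ac)

lemma matrix_add_rdistrib: "((B::'a::semiring_1^'n^'m) + C) ** A = B ** A + C ** A"
  by (simp add: vec_eq_iff matrix_mult_entry sum.distrib distrib_right)

lemma matrix_mult_sum_right: "(A::'a::semiring_1^'n^'m) ** (\<Sum>x\<in>S. f x) = (\<Sum>x\<in>S. A ** f x)"
  by (induction S rule: infinite_finite_induct) (auto simp: matrix_add_ldistrib)

lemma matrix_mult_sum_left: "(\<Sum>x\<in>S. f x) ** (A::'a::semiring_1^'n^'m) = (\<Sum>x\<in>S. f x ** A)"
  by (induction S rule: infinite_finite_induct) (auto simp: matrix_add_rdistrib)

lemma matrix_mult_uminus_right: "(A::'a::ring_1^'n^'m) ** (- M) = - (A ** M)"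
  by (simp add: vec_eq_iff matrix_mult_entry sum_negf)

lemma matrix_mult_uminus_left: "(- M) ** (A::'a::ring_1^'n^'m) = - (M ** A)"
  by (simp add: vec_eq_iff matrix_mult_entry sum_negf)

definition real_diag :: "('n \<Rightarrow> real) \<Rightarrow> complex^'n^'n" where
  "real_diag p = (\<chi> j k. if j = k then complex_of_real (p j) else 0)"

lemma trace_mult_real_diag_mult_cadj:
  fixes y :: "complex^'n^'m"
  shows "trace (y ** real_diag p ** cadj y) = complex_of_real (\<Sum>j\<in>UNIV. \<Sum>k\<in>UNIV. p k * (cmod (y$j$k))\<^sup>2)"
proof -
  have "(y ** real_diag p) $ j $ k = y $ j $ k * complex_of_real (p k)" for j k
    by (simp add: matrix_mult_entry real_diag_def if_distrib cong: if_cong)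
  then show ?thesis
    by (simp add: trace_def matrix_mult_entry[of "y ** real_diag p"] complex_norm_square[symmetric] mult_ac)
qed

lemma trace_cadj_mult_real_diag_mult:
  fixes y :: "complex^'n^'m"
  shows "trace (cadj y ** real_diag p ** y) = complex_of_real (\<Sum>j\<in>UNIV. \<Sum>k\<in>UNIV. p j * (cmod (y$j$k))\<^sup>2)"
proof -
  have "(real_diag p ** y) $ j $ k = complex_of_real (p j) * y $ j $ k" for j k
    by (simp add: matrix_mult_entry real_diag_def if_distrib if_distribR cong: if_cong)
  then show ?thesis
    by (simp add: trace_matrix_mult[of "cadj y"] complex_norm_square[symmetric] mult_ac matrix_mul_assoc[symmetric])
qed

lemma convex_combination_pos:
  fixes a b u :: real
  assumes "0 < a" "0 < b" "0 \<le> u" "u \<le> 1"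
  shows "0 < u * a + (1 - u) * b"
  using assms by (cases "u = 0") (auto intro: add_pos_nonneg)

lemma complete_square_complex:
  fixes w :: real and a v :: complex
  assumes "w > 0"
  defines "v\<^sub>0 \<equiv> - cnj a / complex_of_real w"
  shows "w * (cmod v)\<^sup>2 + 2 * Re (a * v) = w * (cmod (v - v\<^sub>0))\<^sup>2 + (w * (cmod v\<^sub>0)\<^sup>2 + 2 * Re (a * v\<^sub>0))"
  using assms unfolding cmod_power2 by (simp add: field_simps power2_eq_square)

definition weighted_quadratic :: "('n \<Rightarrow> 'n \<Rightarrow> real) \<Rightarrow> complex^'n^'n \<Rightarrow> complex^'n^'n \<Rightarrow> real" where
  "weighted_quadratic w c y = (\<Sum>j\<in>UNIV. \<Sum>k\<in>UNIV. w j k * (cmod (y$j$k))\<^sup>2) + 2 * Re (trace (c ** y))"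

definition weighted_quadratic_argmin :: "('n \<Rightarrow> 'n \<Rightarrow> real) \<Rightarrow> complex^'n^'n \<Rightarrow> complex^'n^'n" where
  "weighted_quadratic_argmin w c = (\<chi> j k. - cnj (c$k$j) / complex_of_real (w j k))"

lemma weighted_quadratic_as_sum:
  "weighted_quadratic w c y = (\<Sum>j\<in>UNIV. \<Sum>k\<in>UNIV. w j k * (cmod (y$j$k))\<^sup>2 + 2 * Re (c$k$j * y$j$k))"
  by (simp add: weighted_quadratic_def trace_matrix_mult Re_sum sum_distrib_left sum.distrib)

lemma weighted_quadratic_completed_square:
  assumes "\<And>j k. w j k > 0"
  shows "weighted_quadratic w c y = weighted_quadratic w c (weighted_quadratic_argmin w c)
           + (\<Sum>j\<in>UNIV. \<Sum>k\<in>UNIV. w j k * (cmod (y$j$k - weighted_quadratic_argmin w c $j$k))\<^sup>2)"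
proof -
  have "w j k * (cmod (y$j$k))\<^sup>2 + 2 * Re (c$k$j * y$j$k)
      = w j k * (cmod (y$j$k - weighted_quadratic_argmin w c $j$k))\<^sup>2
        + (w j k * (cmod (weighted_quadratic_argmin w c $j$k))\<^sup>2
           + 2 * Re (c$k$j * weighted_quadratic_argmin w c $j$k))" for j k
    unfolding weighted_quadratic_argmin_def vec_lambda_beta by (rule complete_square_complex[OF assms])
  then show ?thesis
    unfolding weighted_quadratic_as_sum by (simp add: sum.distrib add_ac)
qed

lemma weighted_quadratic_unique_min:
  assumes "\<And>j k. w j k > 0"
  shows "weighted_quadratic w c (weighted_quadratic_argmin w c) \<le> weighted_quadratic w c y"
    and "weighted_quadratic w c y \<le> weighted_quadratic w c (weighted_quadratic_argmin w c)
           \<Longrightarrow> y = weighted_quadratic_argmin w c"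
proof -
  let ?d = "\<lambda>j k. w j k * (cmod (y$j$k - weighted_quadratic_argmin w c $j$k))\<^sup>2"
  have d_nonneg: "?d j k \<ge> 0" for j k
    using assms[of j k] by simp
  have excess: "weighted_quadratic w c y = weighted_quadratic w c (weighted_quadratic_argmin w c)
      + (\<Sum>j\<in>UNIV. \<Sum>k\<in>UNIV. ?d j k)"
    by (rule weighted_quadratic_completed_square[OF assms])
  have row_nonneg: "(\<Sum>k\<in>UNIV. ?d j k) \<ge> 0" for j
    by (intro sum_nonneg d_nonneg)
  have total_nonneg: "(\<Sum>j\<in>UNIV. \<Sum>k\<in>UNIV. ?d j k) \<ge> 0"
    by (intro sum_nonneg d_nonneg)
  then show "weighted_quadratic w c (weighted_quadratic_argmin w c) \<le> weighted_quadratic w c y"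
    unfolding excess by simp
  assume "weighted_quadratic w c y \<le> weighted_quadratic w c (weighted_quadratic_argmin w c)"
  then have "(\<Sum>j\<in>UNIV. \<Sum>k\<in>UNIV. ?d j k) = 0"
    unfolding excess using total_nonneg by linarith
  then have "?d j k = 0" for j k
    using row_nonneg d_nonneg by (simp add: sum_nonneg_eq_0_iff)
  then show "y = weighted_quadratic_argmin w c"
    using assms by (simp add: vec_eq_iff) (metis less_irrefl)
qed

definition basis_matrix :: "('n \<Rightarrow> complex^'n) \<Rightarrow> complex^'n^'n" where
  "basis_matrix e = (\<chi> a j. e j $ a)"

definition in_basis :: "('n \<Rightarrow> complex^'n) \<Rightarrow> complex^'n^'n \<Rightarrow> complex^'n^'n" where
  "in_basis e M = cadj (basis_matrix e) ** M ** basis_matrix e"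

lemma in_basis_entry: "in_basis e M $ j $ k = mat_elem (e j) M (e k)"
  unfolding in_basis_def mat_elem_def braket_def basis_matrix_def
  by (simp add: matrix_mult_entry matrix_vector_mult_def sum_distrib_left sum_distrib_right mult_ac)
     (rule sum.swap)

lemma in_basis_cadj: "in_basis e (cadj M) = cadj (in_basis e M)"
  by (simp add: in_basis_def cadj_matrix_mult matrix_mul_assoc)

lemma in_basis_mscale: "in_basis e (mscale c M) = mscale c (in_basis e M)"
  by (simp add: in_basis_def matrix_mult_mscale_left matrix_mult_mscale_right)

lemma in_basis_sum: "in_basis e (\<Sum>x\<in>S. f x) = (\<Sum>x\<in>S. in_basis e (f x))"
  by (simp add: in_basis_def matrix_mult_sum_left matrix_mult_sum_right)

lemma in_basis_uminus: "in_basis e (- M) = - in_basis e M"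
  by (simp add: in_basis_def matrix_mult_uminus_left matrix_mult_uminus_right)

context
  fixes e :: "'n::finite \<Rightarrow> complex^'n"
  assumes onb: "orthonormal_basis e"
begin

lemma basis_matrix_unitary:
  "cadj (basis_matrix e) ** basis_matrix e = mat 1" "basis_matrix e ** cadj (basis_matrix e) = mat 1"
proof -
  show "cadj (basis_matrix e) ** basis_matrix e = mat 1"
    using onb by (simp add: vec_eq_iff matrix_mult_entry basis_matrix_def mat_def
        orthonormal_basis_def braket_def)
  then show "basis_matrix e ** cadj (basis_matrix e) = mat 1"
    using matrix_left_right_inverse by blast
qed

lemma in_basis_mult: "in_basis e (M ** N) = in_basis e M ** in_basis e N"
  by (simp add: in_basis_def matrix_mul_assoc)
     (simp add: matrix_mul_assoc[symmetric] basis_matrix_unitary)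

lemma trace_in_basis: "trace (in_basis e M) = trace M"
  unfolding in_basis_def matrix_mul_assoc[symmetric] trace_mul_sym[of "cadj (basis_matrix e)"]
  by (simp add: matrix_mul_assoc basis_matrix_unitary)

lemma in_basis_inj: "in_basis e M = in_basis e N \<Longrightarrow> M = N"
proof -
  have "basis_matrix e ** in_basis e M ** cadj (basis_matrix e) = M" for M
    by (simp add: in_basis_def matrix_mul_assoc basis_matrix_unitary)
       (simp add: matrix_mul_assoc[symmetric] basis_matrix_unitary)
  then show "in_basis e M = in_basis e N \<Longrightarrow> M = N" by metis
qed

lemma in_basis_ket_bra: "in_basis e (ket_bra (e l) (e m)) = (\<chi> j k. if j = l \<and> k = m then 1 else 0)"
proof -
  have "in_basis e (ket_bra (e l) (e m)) $ j $ k = braket (e j) (e l) * braket (e m) (e k)" for j k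
    unfolding in_basis_entry mat_elem_def ket_bra_def braket_def
    by (simp add: matrix_vector_mult_def sum_product sum_distrib_left mult_ac)
  then show ?thesis
    using onb by (simp add: vec_eq_iff orthonormal_basis_def)
qed

lemma in_basis_eigendecomposition:
  "in_basis e (\<Sum>j\<in>UNIV. mscale (complex_of_real (p j)) (ket_bra (e j) (e j))) = real_diag p"
  unfolding in_basis_sum in_basis_mscale in_basis_ket_bra real_diag_def
  by (simp add: vec_eq_iff if_distrib cong: if_cong) (auto intro!: sum.neutral)

lemma Re_L_fun_in_basis:
  assumes "\<rho> = (\<Sum>j\<in>UNIV. mscale (complex_of_real (p j)) (ket_bra (e j) (e j)))"
  shows "Re (L_fun \<rho> \<rho>1 \<rho>2 Y u z) = - (bvec \<bullet> z)
           + weighted_quadratic (\<lambda>j k. u * p k + (1 - u) * p j)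
               (in_basis e (A_op \<rho> \<rho>1 \<rho>2 z)) (in_basis e Y)"
proof -
  define A where "A = A_op \<rho> \<rho>1 \<rho>2 z"
  have \<rho>_in_basis: "in_basis e \<rho> = real_diag p"
    unfolding assms by (rule in_basis_eigendecomposition)
  have "trace (Y ** \<rho> ** cadj Y) = trace (in_basis e Y ** real_diag p ** cadj (in_basis e Y))"
    by (metis trace_in_basis in_basis_mult in_basis_cadj \<rho>_in_basis)
  moreover have "trace (cadj Y ** \<rho> ** Y) = trace (cadj (in_basis e Y) ** real_diag p ** in_basis e Y)"
    by (metis trace_in_basis in_basis_mult in_basis_cadj \<rho>_in_basis)
  moreover have "trace (A ** Y) = trace (in_basis e A ** in_basis e Y)"
    by (metis trace_in_basis in_basis_mult)
  moreover have "trace (cadj A ** cadj Y) = cnj (trace (A ** Y))"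
    by (metis cadj_matrix_mult trace_cadj trace_mul_sym)
  ultimately show ?thesis
    by (simp add: L_fun_def A_def [symmetric] weighted_quadratic_def trace_mult_real_diag_mult_cadj
        trace_cadj_mult_real_diag_mult sum_distrib_left algebra_simps flip: sum.distrib)
qed

end

theorem lemma5:
  fixes \<rho> \<rho>1 \<rho>2 :: "complex^'n^'n"
    and e :: "'n \<Rightarrow> complex^'n" and p :: "'n \<Rightarrow> real"
    and u :: real and z :: "real^6"
  assumes onb: "orthonormal_basis e"
    and pos: "\<And>j. p j > 0"
    and tr1: "(\<Sum>j\<in>UNIV. p j) = 1"
    and rho: "\<rho> = (\<Sum>j\<in>UNIV. mscale (complex_of_real (p j)) (ket_bra (e j) (e j)))"
    and herm1: "cadj \<rho>1 = \<rho>1"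
    and herm2: "cadj \<rho>2 = \<rho>2"
    and u: "0 \<le> u" "u \<le> 1"
  defines "Ystar \<equiv> - (\<Sum>j\<in>UNIV. \<Sum>k\<in>UNIV.
              mscale (complex_of_real (inverse (u * p k + (1 - u) * p j))
                        * mat_elem (e j) (cadj (A_op \<rho> \<rho>1 \<rho>2 z)) (e k))
                     (ket_bra (e j) (e k)))"
  shows "(\<forall>Y. Re (L_fun \<rho> \<rho>1 \<rho>2 Ystar u z) \<le> Re (L_fun \<rho> \<rho>1 \<rho>2 Y u z))
       \<and> (\<forall>Y. (\<forall>Y'. Re (L_fun \<rho> \<rho>1 \<rho>2 Y u z) \<le> Re (L_fun \<rho> \<rho>1 \<rho>2 Y' u z)) \<longrightarrow> Y = Ystar)"
proof -
  define w where "w j k = u * p k + (1 - u) * p j" for j k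
  define a where "a = in_basis e (A_op \<rho> \<rho>1 \<rho>2 z)"
  have w_pos: "w j k > 0" for j k
    unfolding w_def using pos u by (intro convex_combination_pos)
  have "mat_elem (e j) (cadj (A_op \<rho> \<rho>1 \<rho>2 z)) (e k) = cnj (a $ k $ j)" for j k
    by (simp add: a_def in_basis_entry [symmetric] in_basis_cadj)
  then have Ystar_in_basis: "in_basis e Ystar = weighted_quadratic_argmin w a"
    unfolding Ystar_def in_basis_uminus in_basis_sum in_basis_mscale in_basis_ket_bra[OF onb]
    by (simp add: vec_eq_iff if_distrib double_sum_delta cong: if_cong)
       (simp add: weighted_quadratic_argmin_def w_def divide_inverse mult_ac)
  have L_eq: "Re (L_fun \<rho> \<rho>1 \<rho>2 Y u z) = - (bvec \<bullet> z) + weighted_quadratic w a (in_basis e Y)" for Y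
    unfolding Re_L_fun_in_basis[OF onb rho] w_def a_def ..
  show ?thesis
  proof (intro conjI allI impI)
    fix Y
    show "Re (L_fun \<rho> \<rho>1 \<rho>2 Ystar u z) \<le> Re (L_fun \<rho> \<rho>1 \<rho>2 Y u z)"
      unfolding L_eq Ystar_in_basis using weighted_quadratic_unique_min(1)[OF w_pos] by simp
  next
    fix Y
    assume "\<forall>Y'. Re (L_fun \<rho> \<rho>1 \<rho>2 Y u z) \<le> Re (L_fun \<rho> \<rho>1 \<rho>2 Y' u z)"
    then have "weighted_quadratic w a (in_basis e Y) \<le> weighted_quadratic w a (in_basis e Ystar)"
      unfolding L_eq by simp
    then have "in_basis e Y = in_basis e Ystar"
      unfolding Ystar_in_basis by (rule weighted_quadratic_unique_min(2)[OF w_pos])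
    then show "Y = Ystar"
      by (rule in_basis_inj[OF onb])
  qed
qed

end
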